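(* Let $\mathcal{H},\mathcal{H}'$ be real Hilbert spaces, $(\varphi_\gamma)_{\gamma\in\Gamma}$ an orthonormal basis of $\mathcal{H}$, $K:\mathcal{H}\to\mathcal{H}'$ bounded linear with $\|K\|<1$, $g\in\mathcal{H}'$, $\Gamma=\Gamma_1\cup\dots\cup\Gamma_n$ pairwise disjoint, $p_i\in[1,2]$, $p_\gamma=p_i$ for $\gamma\in\Gamma_i$, weights $w_\gamma\ge c>0$. Let $\mathbf{S}_{W,P}(h)=\sum_\gamma S_{w_\gamma,p_\gamma}(\langle h,\varphi_\gamma\rangle)\varphi_\gamma$, $\mathbf{T}(f)=\mathbf{S}_{W,P}(f+K^*(g-Kf))$, $f^0\in\mathcal{H}$, $f^k=\mathbf{T}(f^{k-1})$, let $f^*$ be the weak limit of $(f^k)$, and put $u^k=f^k-f^*$, $h=f^*+K^*(g-Kf^* )$. Then: (A) $\|Ku^k\|\to0$; (B) $\|\mathbf{S}_{W,P}(h+u^k)-\mathbf{S}_{W,P}(h)-u^k\|\to0$; (C) if $a\in\mathcal{H}$ and $(v^k)$ is a sequence in $\mathcal{H}$ with $v^k\to0$ weakly and $\|\mathbf{S}_{W,P}(a+v^k)-\mathbf{S}_{W,P}(a)-v^k\|\to0$, then $\|v^k\|\to0$; (D) $\|u^k\|\to0$, i.e. $f^k\to f^*$ in norm.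
   Context: For $c>0$, $p\ge1$: $S_{c,p}(t)=F_{c,p}^{-1}(t)$ if $p>1$, with $F_{c,p}(t)=t+\frac{cp}2\operatorname{sign}(t)|t|^{p-1}$; $S_{c,1}(t)=t-\frac c2$ if $t>\frac c2$, $0$ if $|t|\le\frac c2$, $t+\frac c2$ if $t<-\frac c2$. It is known under these hypotheses that $(f^k)$ converges weakly to some $f^*\in\mathcal{H}$. All limits are as $k\to\infty$. *)

theory Defs
  imports "HOL-Analysis.Analysis"
begin

definition Fcp :: "real \<Rightarrow> real \<Rightarrow> real \<Rightarrow> real" where
  "Fcp c p t = t + (c * p / 2) * sgn t * \<bar>t\<bar> powr (p - 1)"

definition Scp :: "real \<Rightarrow> real \<Rightarrow> real \<Rightarrow> real" where
  "Scp c p t =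
     (if p = 1 then
        (if t > c / 2 then t - c / 2 else if t < - (c / 2) then t + c / 2 else 0)
      else (THE s. Fcp c p s = t))"

definition orthonormal_basis :: "('i \<Rightarrow> 'a::real_inner) \<Rightarrow> bool" where
  "orthonormal_basis \<phi> \<longleftrightarrow>
     (\<forall>i j. inner (\<phi> i) (\<phi> j) = (if i = j then 1 else 0)) \<and>
     closure (span (range \<phi>)) = UNIV"

definition SWP :: "('i \<Rightarrow> 'a::real_inner) \<Rightarrow> ('i \<Rightarrow> real) \<Rightarrow> ('i \<Rightarrow> real) \<Rightarrow> 'a \<Rightarrow> 'a" where
  "SWP \<phi> w p h = infsum (\<lambda>\<gamma>. Scp (w \<gamma>) (p \<gamma>) (inner h (\<phi> \<gamma>)) *\<^sub>R \<phi> \<gamma>) UNIV"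

definition weakly_converges :: "(nat \<Rightarrow> 'a::real_inner) \<Rightarrow> 'a \<Rightarrow> bool" where
  "weakly_converges x l \<longleftrightarrow> (\<forall>y. (\<lambda>k. inner (x k) y) \<longlonglongrightarrow> inner l y)"

end

(*
  S_{W,P} acts on coefficients by the scalar maps S_{w,p}. These are monotone and so is their
  residual t - S_{w,p} t, hence they are firmly nonexpansive, and by Parseval so is S_{W,P}.
  By Opial's argument the weak limit f* is a fixed point of the iteration, so u^k = f^k - f*
  satisfies u^{k+1} = S_{W,P}(h + (I - K*K) u^k) - S_{W,P}(h); firm nonexpansiveness then gives
  ||u^{k+1}||^2 + ||u^{k+1} - (I - K*K) u^k||^2 + ||K u^k||^2 <= ||u^k||^2, so the last two terms
  are summable, which yields (A) and (B).
  For (C): since w >= c and p takes only finitely many values, the residual t - S_{w,p} t has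
  slope bounded below near 0 uniformly in gamma. Away from the finitely many large coefficients
  of a the residual therefore dominates the coefficients of v^k, while the remaining finitely
  many coefficients tend to 0 by weak convergence. (D) is (C) for a = h and v = u.
*)
theory Submission
  imports Defs
begin

section \<open>Orthonormal bases\<close>

lemma orthonormal_basis_inner:
  "orthonormal_basis \<phi> \<Longrightarrow> inner (\<phi> i) (\<phi> j) = (if i = j then 1 else 0)"
  unfolding orthonormal_basis_def by blast

lemma orthonormal_basis_dense:
  "orthonormal_basis \<phi> \<Longrightarrow> closure (span (range \<phi>)) = UNIV"
  unfolding orthonormal_basis_def by blast

lemma inner_sum_orthonormal:
  assumes "orthonormal_basis \<phi>" "finite W"
  shows "inner (\<Sum>\<gamma>\<in>W. d \<gamma> *\<^sub>R \<phi> \<gamma>) (\<phi> \<delta>) = (if \<delta> \<in> W then d \<delta> else 0)"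
  using assms(2) by (simp add: inner_sum_left orthonormal_basis_inner[OF assms(1)] if_distrib cong: if_cong)

lemma norm_sum_orthonormal_sq:
  assumes "orthonormal_basis \<phi>" "finite W"
  shows "(norm (\<Sum>\<gamma>\<in>W. d \<gamma> *\<^sub>R \<phi> \<gamma>))\<^sup>2 = (\<Sum>\<gamma>\<in>W. (d \<gamma>)\<^sup>2)"
proof -
  have "(norm (\<Sum>\<gamma>\<in>W. d \<gamma> *\<^sub>R \<phi> \<gamma>))\<^sup>2 =
      (\<Sum>\<delta>\<in>W. d \<delta> * inner (\<Sum>\<gamma>\<in>W. d \<gamma> *\<^sub>R \<phi> \<gamma>) (\<phi> \<delta>))"
    by (simp add: power2_norm_eq_inner inner_sum_right)
  also have "\<dots> = (\<Sum>\<gamma>\<in>W. (d \<gamma>)\<^sup>2)"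
    using assms by (simp add: inner_sum_orthonormal power2_eq_square)
  finally show ?thesis .
qed

lemma bessel_inequality:
  assumes "orthonormal_basis \<phi>" "finite F"
  shows "(\<Sum>\<gamma>\<in>F. (inner x (\<phi> \<gamma>))\<^sup>2) \<le> (norm x)\<^sup>2"
proof -
  define y where "y = (\<Sum>\<gamma>\<in>F. inner x (\<phi> \<gamma>) *\<^sub>R \<phi> \<gamma>)"
  have "inner x y = (\<Sum>\<gamma>\<in>F. (inner x (\<phi> \<gamma>))\<^sup>2)"
    unfolding y_def by (simp add: inner_sum_right power2_eq_square)
  moreover have "(norm y)\<^sup>2 = (\<Sum>\<gamma>\<in>F. (inner x (\<phi> \<gamma>))\<^sup>2)"
    unfolding y_def using norm_sum_orthonormal_sq[OF assms] by simp
  moreover have "(norm (x - y))\<^sup>2 = (norm x)\<^sup>2 - 2 * inner x y + (norm y)\<^sup>2"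
    by (simp add: power2_norm_eq_inner inner_diff_left inner_diff_right inner_commute)
  ultimately show ?thesis
    using zero_le_power2[of "norm (x - y)"] by linarith
qed

lemma abs_inner_orthonormal_le:
  assumes "orthonormal_basis \<phi>"
  shows "\<bar>inner x (\<phi> \<gamma>)\<bar> \<le> norm x"
  using bessel_inequality[OF assms, of "{\<gamma>}" x] abs_le_square_iff[of _ "norm x"] by simp

lemma summable_on_orthonormal_coefficients_sq:
  "orthonormal_basis \<phi> \<Longrightarrow> (\<lambda>\<gamma>. (inner x (\<phi> \<gamma>))\<^sup>2) summable_on UNIV"
  by (rule nonneg_bdd_above_summable_on)
     (auto intro!: bdd_aboveI[of _ "(norm x)\<^sup>2"] bessel_inequality)

lemma finite_large_orthonormal_coefficients:
  assumes "orthonormal_basis \<phi>" "\<delta> > 0"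
  shows "finite {\<gamma>. \<delta> < \<bar>inner a (\<phi> \<gamma>)\<bar>}"
proof -
  have "card G \<le> nat \<lceil>(norm a)\<^sup>2 / \<delta>\<^sup>2\<rceil>"
    if G: "G \<subseteq> {\<gamma>. \<delta> < \<bar>inner a (\<phi> \<gamma>)\<bar>}" "finite G" for G
  proof -
    have "real (card G) * \<delta>\<^sup>2 \<le> (\<Sum>\<gamma>\<in>G. (inner a (\<phi> \<gamma>))\<^sup>2)"
      using G assms(2) by (intro sum_bounded_below) (auto simp: abs_le_square_iff[symmetric])
    also have "\<dots> \<le> (norm a)\<^sup>2"
      by (rule bessel_inequality[OF assms(1) G(2)])
    finally have "real (card G) \<le> (norm a)\<^sup>2 / \<delta>\<^sup>2"
      using assms(2) by (simp add: le_divide_eq)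
    then show ?thesis
      by linarith
  qed
  then show ?thesis
    using finite_if_finite_subsets_card_bdd by blast
qed

lemma summable_on_if_small_tails:
  fixes f :: "'i \<Rightarrow> 'a::{real_normed_vector, complete_space}"
  assumes "\<And>e. e > 0 \<Longrightarrow> \<exists>X. finite X \<and> (\<forall>Y. finite Y \<and> X \<inter> Y = {} \<longrightarrow> norm (sum f Y) < e)"
  shows "f summable_on UNIV"
proof -
  have "\<exists>P. eventually P (finite_subsets_at_top UNIV) \<and>
            (\<forall>F F'. P F \<and> P F' \<longrightarrow> dist (sum f F) (sum f F') < e)" if "e > 0" for e
  proof -
    obtain X where X: "finite X" "\<And>Y. finite Y \<Longrightarrow> X \<inter> Y = {} \<Longrightarrow> norm (sum f Y) < e/2"
      using assms[of "e/2"] \<open>e > 0\<close> by auto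
    have split: "sum f F = sum f X + sum f (F - X)" if "finite F" "X \<subseteq> F" for F
      using that by (simp add: sum.subset_diff[of X])
    have "dist (sum f F) (sum f F') < e"
      if "finite F" "X \<subseteq> F" "finite F'" "X \<subseteq> F'" for F F'
    proof -
      have "dist (sum f F) (sum f F') \<le> norm (sum f (F - X)) + norm (sum f (F' - X))"
        using that by (simp add: split dist_norm norm_triangle_ineq4)
      also have "\<dots> < e/2 + e/2"
        using X(2)[of "F - X"] X(2)[of "F' - X"] that by (intro add_strict_mono) auto
      finally show ?thesis by simp
    qed
    moreover have "eventually (\<lambda>F. finite F \<and> X \<subseteq> F) (finite_subsets_at_top UNIV)"
      unfolding eventually_finite_subsets_at_top using X(1) by blast
    ultimately show ?thesis by blast
  qed
  then have "cauchy_filter (filtermap (sum f) (finite_subsets_at_top UNIV))"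
    by (simp add: cauchy_filter_metric_filtermap)
  moreover have "complete (UNIV :: 'a set)"
    by (simp add: complete_UNIV)
  ultimately obtain L where "(sum f \<longlongrightarrow> L) (finite_subsets_at_top UNIV)"
    using complete_uniform[where S=UNIV] by (force simp add: filterlim_def)
  then show ?thesis
    unfolding summable_on_def has_sum_def by blast
qed

lemma small_tails_if_summable_on_nonneg:
  fixes d :: "'i \<Rightarrow> real"
  assumes "d summable_on UNIV" "\<And>x. d x \<ge> 0" "e > 0"
  shows "\<exists>X. finite X \<and> (\<forall>Y. finite Y \<and> X \<inter> Y = {} \<longrightarrow> sum d Y < e)"
proof -
  obtain X where X: "finite X" "dist (sum d X) (infsum d UNIV) \<le> e/2"
    using infsum_finite_approximation[OF assms(1), of "e/2"] assms(3) by auto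
  have "sum d Y < e" if Y: "finite Y" "X \<inter> Y = {}" for Y
  proof -
    have "sum d X + sum d Y = sum d (X \<union> Y)"
      using Y X(1) by (simp add: sum.union_disjoint)
    also have "\<dots> \<le> infsum d UNIV"
      using X(1) Y assms(1,2) by (intro finite_sum_le_infsum) auto
    finally show ?thesis
      using X(2) assms(3) unfolding dist_real_def abs_le_iff by linarith
  qed
  then show ?thesis
    using X(1) by blast
qed

lemma summable_on_orthonormal_series:
  fixes \<phi> :: "'i \<Rightarrow> 'a::{real_inner, complete_space}"
  assumes onb: "orthonormal_basis \<phi>" and sq: "(\<lambda>\<gamma>. (d \<gamma>)\<^sup>2) summable_on UNIV"
  shows "(\<lambda>\<gamma>. d \<gamma> *\<^sub>R \<phi> \<gamma>) summable_on UNIV"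
proof (rule summable_on_if_small_tails)
  fix e :: real assume e: "e > 0"
  then obtain X where X: "finite X" "\<And>Y. finite Y \<Longrightarrow> X \<inter> Y = {} \<Longrightarrow> (\<Sum>\<gamma>\<in>Y. (d \<gamma>)\<^sup>2) < e\<^sup>2"
    using small_tails_if_summable_on_nonneg[OF sq, of "e\<^sup>2"] by auto
  have "norm (\<Sum>\<gamma>\<in>Y. d \<gamma> *\<^sub>R \<phi> \<gamma>) < e" if "finite Y" "X \<inter> Y = {}" for Y
  proof (rule power_less_imp_less_base)
    show "(norm (\<Sum>\<gamma>\<in>Y. d \<gamma> *\<^sub>R \<phi> \<gamma>))\<^sup>2 < e\<^sup>2"
      using X(2)[OF that] by (simp add: norm_sum_orthonormal_sq[OF onb that(1)])
  qed (use e in simp)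
  then show "\<exists>X. finite X \<and> (\<forall>Y. finite Y \<and> X \<inter> Y = {} \<longrightarrow> norm (\<Sum>\<gamma>\<in>Y. d \<gamma> *\<^sub>R \<phi> \<gamma>) < e)"
    using X(1) by blast
qed

lemma inner_orthonormal_series:
  assumes onb: "orthonormal_basis \<phi>" and S: "((\<lambda>\<gamma>. d \<gamma> *\<^sub>R \<phi> \<gamma>) has_sum S) UNIV"
  shows "inner S (\<phi> \<delta>) = d \<delta>"
proof -
  have "((\<lambda>\<gamma>. inner (d \<gamma> *\<^sub>R \<phi> \<gamma>) (\<phi> \<delta>)) has_sum inner S (\<phi> \<delta>)) UNIV"
    by (rule has_sum_bounded_linear[OF bounded_linear_inner_left S])
  moreover have "((\<lambda>\<gamma>. inner (d \<gamma> *\<^sub>R \<phi> \<gamma>) (\<phi> \<delta>)) has_sum d \<delta>) UNIV"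
    by (rule has_sum_finite_neutralI[of "{\<delta>}"]) (auto simp: orthonormal_basis_inner[OF onb])
  ultimately show ?thesis
    using has_sum_unique by blast
qed

lemma bounded_linear_vanishing_on_orthonormal_basis:
  fixes \<phi> :: "'i \<Rightarrow> 'a::real_inner" and M :: "'a \<Rightarrow> real"
  assumes onb: "orthonormal_basis \<phi>" and M: "bounded_linear M" and zero: "\<And>\<gamma>. M (\<phi> \<gamma>) = 0"
  shows "M x = 0"
proof -
  have "span (range \<phi>) \<subseteq> {y. M y = 0}"
    using zero linear_subspace_kernel[OF bounded_linear.linear[OF M]] by (intro span_minimal) auto
  moreover have "closed {y. M y = 0}"
    using M by (intro closed_Collect_eq continuous_on_const linear_continuous_on)
  ultimately have "closure (span (range \<phi>)) \<subseteq> {y. M y = 0}"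
    by (rule closure_minimal)
  then show ?thesis
    using orthonormal_basis_dense[OF onb] by auto
qed

lemma orthonormal_expansion:
  fixes \<phi> :: "'i \<Rightarrow> 'a::{real_inner, complete_space}"
  assumes onb: "orthonormal_basis \<phi>"
  shows "((\<lambda>\<gamma>. inner x (\<phi> \<gamma>) *\<^sub>R \<phi> \<gamma>) has_sum x) UNIV"
proof -
  obtain S where S: "((\<lambda>\<gamma>. inner x (\<phi> \<gamma>) *\<^sub>R \<phi> \<gamma>) has_sum S) UNIV"
    using summable_on_orthonormal_series[OF onb summable_on_orthonormal_coefficients_sq[OF onb]]
    unfolding summable_on_def by blast
  have "inner (x - S) y = 0" for y
    using onb bounded_linear_inner_right[of "x - S"]
    by (rule bounded_linear_vanishing_on_orthonormal_basis)
       (simp add: inner_diff_left inner_orthonormal_series[OF onb S])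
  then have "inner (x - S) (x - S) = 0" .
  then have "x = S"
    by simp
  with S show ?thesis by simp
qed

lemma parseval:
  fixes \<phi> :: "'i \<Rightarrow> 'a::{real_inner, complete_space}"
  assumes onb: "orthonormal_basis \<phi>"
  shows "((\<lambda>\<gamma>. (inner x (\<phi> \<gamma>))\<^sup>2) has_sum (norm x)\<^sup>2) UNIV"
proof -
  have "((\<lambda>F. (norm (\<Sum>\<gamma>\<in>F. inner x (\<phi> \<gamma>) *\<^sub>R \<phi> \<gamma>))\<^sup>2) \<longlongrightarrow> (norm x)\<^sup>2) (finite_subsets_at_top UNIV)"
    using orthonormal_expansion[OF onb, of x] unfolding has_sum_def by (intro tendsto_intros)
  moreover have "eventually (\<lambda>F. (norm (\<Sum>\<gamma>\<in>F. inner x (\<phi> \<gamma>) *\<^sub>R \<phi> \<gamma>))\<^sup>2 =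
      (\<Sum>\<gamma>\<in>F. (inner x (\<phi> \<gamma>))\<^sup>2)) (finite_subsets_at_top UNIV)"
    using norm_sum_orthonormal_sq[OF onb] by (auto intro: eventually_finite_subsets_at_top_weakI)
  ultimately show ?thesis
    unfolding has_sum_def by (rule Lim_transform_eventually)
qed

lemma parseval_inner:
  fixes \<phi> :: "'i \<Rightarrow> 'a::{real_inner, complete_space}"
  assumes onb: "orthonormal_basis \<phi>"
  shows "((\<lambda>\<gamma>. inner x (\<phi> \<gamma>) * inner y (\<phi> \<gamma>)) has_sum inner x y) UNIV"
proof -
  have "((\<lambda>\<gamma>. ((inner (x + y) (\<phi> \<gamma>))\<^sup>2 + - (inner (x - y) (\<phi> \<gamma>))\<^sup>2) / 4)
          has_sum ((norm (x + y))\<^sup>2 + - (norm (x - y))\<^sup>2) / 4) UNIV"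
    by (intro has_sum_divide_const has_sum_add has_sum_uminusI parseval[OF onb])
  moreover have "((norm (x + y))\<^sup>2 + - (norm (x - y))\<^sup>2) / 4 = inner x y"
    by (simp add: power2_norm_eq_inner inner_add_left inner_add_right inner_diff_left
        inner_diff_right inner_commute)
  moreover have "((inner (x + y) (\<phi> \<gamma>))\<^sup>2 + - (inner (x - y) (\<phi> \<gamma>))\<^sup>2) / 4 =
      inner x (\<phi> \<gamma>) * inner y (\<phi> \<gamma>)" for \<gamma>
    by (simp add: inner_add_left inner_diff_left power2_eq_square algebra_simps)
  ultimately show ?thesis by simp
qed

lemma sum_sq_functional_orthonormal_le:
  fixes L :: "'a::real_inner \<Rightarrow> real"
  assumes onb: "orthonormal_basis \<phi>" and lin: "linear L" and B: "\<And>x. norm (L x) \<le> norm x * B"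
    and "finite F"
  shows "(\<Sum>\<gamma>\<in>F. (L (\<phi> \<gamma>))\<^sup>2) \<le> B\<^sup>2"
proof -
  define s where "s = (\<Sum>\<gamma>\<in>F. (L (\<phi> \<gamma>))\<^sup>2)"
  define y where "y = (\<Sum>\<gamma>\<in>F. L (\<phi> \<gamma>) *\<^sub>R \<phi> \<gamma>)"
  have "L y = s"
    unfolding y_def s_def by (simp add: linear_sum[OF lin] linear_scale[OF lin] power2_eq_square)
  then have "s \<le> norm y * B"
    using B[of y] by simp
  moreover have s0: "0 \<le> s"
    unfolding s_def by (simp add: sum_nonneg)
  ultimately have "s\<^sup>2 \<le> (norm y * B)\<^sup>2"
    by (intro power_mono) auto
  also have "\<dots> = s * B\<^sup>2"
    using norm_sum_orthonormal_sq[OF onb \<open>finite F\<close>] by (simp add: y_def s_def power_mult_distrib)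
  finally have "s * s \<le> s * B\<^sup>2"
    by (simp add: power2_eq_square)
  then have "s \<le> B\<^sup>2"
    using s0 by (cases "s = 0") (simp_all add: mult_le_cancel_left_pos)
  then show ?thesis
    unfolding s_def .
qed

lemma riesz_representation:
  fixes \<phi> :: "'i \<Rightarrow> 'a::{real_inner, complete_space}" and L :: "'a \<Rightarrow> real"
  assumes onb: "orthonormal_basis \<phi>" and L: "bounded_linear L"
  shows "\<exists>z. \<forall>x. L x = inner x z"
proof -
  obtain B where B: "\<And>x. norm (L x) \<le> norm x * B"
    using bounded_linear.bounded[OF L] by blast
  have "(\<lambda>\<gamma>. (L (\<phi> \<gamma>))\<^sup>2) summable_on UNIV"
    using sum_sq_functional_orthonormal_le[OF onb bounded_linear.linear[OF L] B]
    by (intro nonneg_bdd_above_summable_on) (auto intro!: bdd_aboveI[of _ "B\<^sup>2"])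
  then have "(\<lambda>\<gamma>. L (\<phi> \<gamma>) *\<^sub>R \<phi> \<gamma>) summable_on UNIV"
    by (rule summable_on_orthonormal_series[OF onb])
  then obtain z where z: "((\<lambda>\<gamma>. L (\<phi> \<gamma>) *\<^sub>R \<phi> \<gamma>) has_sum z) UNIV"
    unfolding summable_on_def by blast
  have "L x - inner x z = 0" for x
  proof (rule bounded_linear_vanishing_on_orthonormal_basis[OF onb, where M="\<lambda>x. L x - inner x z"])
    show "bounded_linear (\<lambda>x. L x - inner x z)"
      using L by (intro bounded_linear_sub bounded_linear_inner_left)
    show "L (\<phi> \<gamma>) - inner (\<phi> \<gamma>) z = 0" for \<gamma>
      using inner_orthonormal_series[OF onb z, of \<gamma>] by (simp add: inner_commute)
  qed
  then show ?thesis
    by auto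
qed

lemma inner_adjoint:
  fixes \<phi> :: "'i \<Rightarrow> 'a::{real_inner, complete_space}" and K :: "'a \<Rightarrow> 'b::real_inner"
  assumes onb: "orthonormal_basis \<phi>" and K: "bounded_linear K"
  shows "inner (K x) y = inner x (adjoint K y)"
proof -
  have "\<forall>y. \<exists>z. \<forall>x. inner (K x) y = inner x z"
  proof
    show "\<exists>z. \<forall>x. inner (K x) y = inner x z" for y
      by (rule riesz_representation[OF onb bounded_linear_compose[OF bounded_linear_inner_left K]])
  qed
  then have "\<exists>K'. \<forall>y x. inner (K x) y = inner x (K' y)"
    by (rule choice)
  then have "\<exists>K'. \<forall>x y. inner (K x) y = inner x (K' y)"
    by blast
  then have "\<forall>x y. inner (K x) y = inner x (adjoint K y)"
    unfolding adjoint_def by (rule someI_ex)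
  then show ?thesis
    by blast
qed

lemma weakly_converges_iff_diff_zero:
  "weakly_converges f l \<longleftrightarrow> weakly_converges (\<lambda>k. f k - l) 0"
  unfolding weakly_converges_def by (simp add: inner_diff_left LIM_zero_iff)

lemma norm_sq_le_by_coefficients:
  fixes \<phi> :: "'i \<Rightarrow> 'a::{real_inner, complete_space}"
  assumes onb: "orthonormal_basis \<phi>" and "finite \<Gamma>" "0 < \<kappa>"
    and coeff: "\<And>\<gamma>. \<gamma> \<notin> \<Gamma> \<Longrightarrow> \<kappa> * \<bar>inner v (\<phi> \<gamma>)\<bar> \<le> \<bar>inner d (\<phi> \<gamma>)\<bar>"
  shows "(norm v)\<^sup>2 \<le> (norm d)\<^sup>2 / \<kappa>\<^sup>2 + (\<Sum>\<gamma>\<in>\<Gamma>. (inner v (\<phi> \<gamma>))\<^sup>2)"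
proof (rule has_sum_mono[OF parseval[OF onb]])
  show "((\<lambda>\<gamma>. (inner d (\<phi> \<gamma>))\<^sup>2 / \<kappa>\<^sup>2 + (if \<gamma> \<in> \<Gamma> then (inner v (\<phi> \<gamma>))\<^sup>2 else 0))
      has_sum (norm d)\<^sup>2 / \<kappa>\<^sup>2 + (\<Sum>\<gamma>\<in>\<Gamma>. (inner v (\<phi> \<gamma>))\<^sup>2)) UNIV"
    using \<open>finite \<Gamma>\<close>
    by (intro has_sum_add has_sum_divide_const parseval[OF onb] has_sum_finite_neutralI) auto
  show "(inner v (\<phi> \<gamma>))\<^sup>2 \<le> (inner d (\<phi> \<gamma>))\<^sup>2 / \<kappa>\<^sup>2 + (if \<gamma> \<in> \<Gamma> then (inner v (\<phi> \<gamma>))\<^sup>2 else 0)"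
    for \<gamma>
  proof (cases "\<gamma> \<in> \<Gamma>")
    case False
    have "(\<kappa> * \<bar>inner v (\<phi> \<gamma>)\<bar>)\<^sup>2 \<le> (inner d (\<phi> \<gamma>))\<^sup>2"
      using coeff[OF False] \<open>0 < \<kappa>\<close> by (simp add: abs_le_square_iff[symmetric])
    with False \<open>0 < \<kappa>\<close> show ?thesis
      by (simp add: le_divide_eq power_mult_distrib mult.commute)
  qed simp
qed

section \<open>The scalar thresholding maps\<close>

lemma sgn_mult_powr_nonneg [simp]:
  fixes s q :: real
  shows "0 \<le> s \<Longrightarrow> sgn s * s powr q = s powr q"
  by (cases "s = 0") auto

lemma sgn_mult_abs_powr_mono:
  fixes s t q :: real
  assumes "0 \<le> q" "s \<le> t"
  shows "sgn s * \<bar>s\<bar> powr q \<le> sgn t * \<bar>t\<bar> powr q"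
proof (cases "0 \<le> s")
  case True
  then show ?thesis
    using assms by (simp add: powr_mono2)
next
  case False
  show ?thesis
  proof (cases "0 \<le> t")
    case True
    have "sgn s * \<bar>s\<bar> powr q \<le> 0"
      using False by (simp add: sgn_if)
    moreover have "0 \<le> sgn t * \<bar>t\<bar> powr q"
      using True by (simp add: sgn_if)
    ultimately show ?thesis
      by linarith
  next
    case t_neg: False
    have "\<bar>t\<bar> powr q \<le> \<bar>s\<bar> powr q"
      using assms False t_neg by (intro powr_mono2) auto
    then show ?thesis
      using False t_neg by (simp add: sgn_if)
  qed
qed

lemma Fcp_minus: "Fcp w p (- s) = - Fcp w p s"
  by (simp add: Fcp_def sgn_minus)

lemma Fcp_strict_mono:
  assumes "0 \<le> w" "1 \<le> p" "s < t"
  shows "Fcp w p s < Fcp w p t"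
proof -
  have "w * p / 2 * (sgn s * \<bar>s\<bar> powr (p - 1)) \<le> w * p / 2 * (sgn t * \<bar>t\<bar> powr (p - 1))"
    using assms by (intro mult_left_mono sgn_mult_abs_powr_mono) auto
  then show ?thesis
    using assms(3) unfolding Fcp_def by (simp add: mult.assoc)
qed

lemma Fcp_surj:
  assumes "0 \<le> w" "1 < p"
  shows "\<exists>s. Fcp w p s = t"
proof -
  have nonneg: "\<exists>s. Fcp w p s = t" if t: "0 \<le> t" for t
  proof -
    define H where "H s = s + w * p / 2 * s powr (p - 1)" for s
    have "continuous_on {0..t} H"
      unfolding H_def using assms by (intro continuous_intros continuous_on_powr') auto
    moreover have "H 0 \<le> t" "t \<le> H t"
      using assms t by (auto simp: H_def)
    ultimately obtain s where "0 \<le> s" "H s = t"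
      using IVT'[of H 0 t t] t by auto
    then have "Fcp w p s = t"
      by (simp add: H_def Fcp_def mult.assoc)
    then show ?thesis ..
  qed
  show ?thesis
  proof (cases "0 \<le> t")
    case False
    then obtain s where "Fcp w p s = - t"
      using nonneg[of "- t"] by auto
    then have "Fcp w p (- s) = t"
      by (simp add: Fcp_minus)
    then show ?thesis ..
  qed (rule nonneg)
qed

lemma Fcp_Scp:
  assumes "0 \<le> w" "1 < p"
  shows "Fcp w p (Scp w p t) = t"
proof -
  obtain s where s: "Fcp w p s = t"
    using Fcp_surj[OF assms] by blast
  have "s' = s" if "Fcp w p s' = t" for s'
    using Fcp_strict_mono[of w p s s'] Fcp_strict_mono[of w p s' s] assms s that
    by (cases s s' rule: linorder_cases) auto
  with s have "\<exists>!s. Fcp w p s = t"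
    by blast
  moreover have "Scp w p t = (THE s. Fcp w p s = t)"
    using assms by (simp add: Scp_def)
  ultimately show ?thesis
    using theI' by simp
qed

lemma Scp_residual:
  assumes "0 \<le> w" "1 < p"
  shows "t - Scp w p t = w * p / 2 * (sgn (Scp w p t) * \<bar>Scp w p t\<bar> powr (p - 1))"
  using Fcp_Scp[OF assms, of t] unfolding Fcp_def by (simp add: mult.assoc)

lemma Scp_mono:
  assumes "0 \<le> w" "1 \<le> p" "x \<le> y"
  shows "Scp w p x \<le> Scp w p y"
proof (cases "p = 1")
  case True
  then show ?thesis
    using assms by (auto simp: Scp_def)
next
  case False
  then have "1 < p"
    using assms by simp
  show ?thesis
  proof (rule ccontr)
    assume "\<not> ?thesis"
    then have "Fcp w p (Scp w p y) < Fcp w p (Scp w p x)"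
      using Fcp_strict_mono assms by simp
    then show False
      using Fcp_Scp[OF assms(1) \<open>1 < p\<close>] assms(3) by simp
  qed
qed

lemma Scp_residual_mono:
  assumes "0 \<le> w" "1 \<le> p" "x \<le> y"
  shows "x - Scp w p x \<le> y - Scp w p y"
proof (cases "p = 1")
  case True
  then show ?thesis
    using assms by (auto simp: Scp_def)
next
  case False
  then have "1 < p"
    using assms by simp
  have "w * p / 2 * (sgn (Scp w p x) * \<bar>Scp w p x\<bar> powr (p - 1))
      \<le> w * p / 2 * (sgn (Scp w p y) * \<bar>Scp w p y\<bar> powr (p - 1))"
    using assms by (intro mult_left_mono sgn_mult_abs_powr_mono Scp_mono) auto
  then show ?thesis
    by (simp only: Scp_residual[OF assms(1) \<open>1 < p\<close>])
qed

lemma Scp_firmly_nonexpansive: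
  assumes "0 \<le> w" "1 \<le> p"
  shows "(Scp w p x - Scp w p y)\<^sup>2 \<le> (Scp w p x - Scp w p y) * (x - y)"
proof -
  have "0 \<le> (Scp w p x - Scp w p y) * ((x - Scp w p x) - (y - Scp w p y))"
  proof (cases "x \<le> y")
    case True
    then show ?thesis
      using Scp_mono[OF assms True] Scp_residual_mono[OF assms True]
      by (intro mult_nonpos_nonpos) auto
  next
    case False
    then have "y \<le> x"
      by simp
    then show ?thesis
      using Scp_mono[OF assms] Scp_residual_mono[OF assms]
      by (intro mult_nonneg_nonneg) auto
  qed
  then show ?thesis
    by (simp add: power2_eq_square algebra_simps)
qed

lemma Scp_zero:
  assumes "0 \<le> w" "1 \<le> p"
  shows "Scp w p 0 = 0"
proof (cases "p = 1")
  case True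
  then show ?thesis
    using assms by (simp add: Scp_def)
next
  case False
  then have "Fcp w p (Scp w p 0) = Fcp w p 0"
    using Fcp_Scp[of w p 0] assms by (simp add: Fcp_def)
  then show ?thesis
    using Fcp_strict_mono[of w p 0 "Scp w p 0"] Fcp_strict_mono[of w p "Scp w p 0" 0] assms
    by (cases "Scp w p 0" "0::real" rule: linorder_cases) auto
qed

lemma abs_Scp_le:
  assumes "0 \<le> w" "1 \<le> p"
  shows "\<bar>Scp w p t\<bar> \<le> \<bar>t\<bar>"
proof -
  have "Scp w p t * Scp w p t \<le> Scp w p t * t"
    using Scp_firmly_nonexpansive[OF assms, of t 0] by (simp add: Scp_zero[OF assms] power2_eq_square)
  also have "\<dots> \<le> \<bar>Scp w p t\<bar> * \<bar>t\<bar>"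
    by (simp add: abs_mult[symmetric])
  finally have "\<bar>Scp w p t\<bar> * \<bar>Scp w p t\<bar> \<le> \<bar>Scp w p t\<bar> * \<bar>t\<bar>"
    by simp
  from mult_left_le_imp_le[OF this] show ?thesis
    by (cases "Scp w p t = 0") auto
qed

lemma powr_tangent_le:
  fixes q a b :: real
  assumes q: "0 < q" "q \<le> 1" and ab: "0 \<le> a" "a \<le> b" "0 < b"
  shows "q * b powr (q - 1) * (b - a) \<le> b powr q - a powr q"
proof (cases "a = 0")
  case True
  then show ?thesis
    using q ab by (simp add: powr_diff mult_left_le_one_le)
next
  case False
  have "(a / b) powr q * 1 powr (1 - q) \<le> q * (a / b) + (1 - q) * 1"
    using q ab False by (intro Youngs_inequality_0) auto
  then have "b powr q * (a / b) powr q \<le> b powr q * (q * (a / b) + (1 - q))"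
    by (intro mult_left_mono) auto
  moreover have "b powr q * (a / b) powr q = a powr q"
    using ab by (simp add: powr_divide)
  moreover have "b powr q * (q * (a / b) + (1 - q)) = b powr q - q * b powr (q - 1) * (b - a)"
    using ab by (simp add: powr_diff field_simps)
  ultimately show ?thesis
    by linarith
qed

text \<open>On \<open>[0, 2]\<close> the slope of the concave map \<open>s \<mapsto> s powr q\<close> is at least
  \<open>q * 2 powr (q - 1) \<ge> q / 2\<close>.\<close>

lemma powr_increment_lower_bound:
  fixes q a b :: real
  assumes q: "0 < q" "q \<le> 1" and ab: "0 \<le> a" "a \<le> b" "b \<le> 2"
  shows "q / 2 * (b - a) \<le> b powr q - a powr q"
proof (cases "b = 0")
  case False
  then have b: "0 < b"
    using ab by simp
  have "1 / 2 \<le> b powr (q - 1)"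
  proof -
    have "2 powr (-1) \<le> 2 powr (q - 1)"
      using q by (intro powr_mono) auto
    also have "\<dots> \<le> b powr (q - 1)"
      using q ab b by (intro powr_mono2') auto
    finally show ?thesis
      by (simp add: powr_minus)
  qed
  then have "q * (1 / 2) * (b - a) \<le> q * b powr (q - 1) * (b - a)"
    using q ab by (intro mult_right_mono mult_left_mono) auto
  then show ?thesis
    using powr_tangent_le[OF q ab(1,2) b] by simp
qed (use ab in simp)

lemma sgn_mult_abs_powr_increment_lower_bound:
  fixes q s t :: real
  assumes q: "0 < q" "q \<le> 1" and st: "s \<le> t" "\<bar>s\<bar> \<le> 2" "\<bar>t\<bar> \<le> 2"
  shows "q / 2 * (t - s) \<le> sgn t * \<bar>t\<bar> powr q - sgn s * \<bar>s\<bar> powr q"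
proof -
  consider "0 \<le> s" | "t \<le> 0" | "s < 0" "0 < t"
    by linarith
  then show ?thesis
  proof cases
    case 1
    then show ?thesis
      using powr_increment_lower_bound[OF q, of s t] st by simp
  next
    case 2
    then show ?thesis
      using powr_increment_lower_bound[OF q, of "- t" "- s"] st
      by (cases "t = 0") (auto simp: sgn_if algebra_simps)
  next
    case 3
    then show ?thesis
      using powr_increment_lower_bound[OF q, of 0 t] powr_increment_lower_bound[OF q, of 0 "- s"] st
      by (auto simp: sgn_if algebra_simps)
  qed
qed

text \<open>Where \<open>(w p / 2) sgn s |s|^(p-1)\<close> has slope at least \<open>r = c \<rho> / 4\<close> on \<open>[-2, 2]\<close>, the
  residual \<open>t - S t\<close>, i.e. this function evaluated at \<open>S t\<close>, has slope at least \<open>r / (1 + r)\<close>.\<close>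

lemma Scp_residual_slope:
  assumes c: "0 < c" "c \<le> w" and p: "0 < \<rho>" "\<rho> \<le> p - 1" "p \<le> 2"
    and xy: "\<bar>x\<bar> \<le> 2" "\<bar>y\<bar> \<le> 2" "y \<le> x"
  shows "c * \<rho> / (4 + c * \<rho>) * (x - y) \<le> (x - Scp w p x) - (y - Scp w p y)"
proof -
  have w: "0 \<le> w" "1 < p" "1 \<le> p"
    using c p by auto
  define s t where "s = Scp w p x" and "t = Scp w p y"
  have st: "t \<le> s" "\<bar>s\<bar> \<le> 2" "\<bar>t\<bar> \<le> 2"
    unfolding s_def t_def using Scp_mono[OF w(1,3) xy(3)] abs_Scp_le[OF w(1,3)] xy
    by (auto intro: order_trans)
  have "w * 1 \<le> w * p"
    using w by (intro mult_left_mono) auto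
  then have "c \<le> w * p"
    using c by linarith
  have "c * \<rho> * (s - t) / 4 = c / 2 * (\<rho> / 2 * (s - t))"
    by simp
  also have "\<dots> \<le> w * p / 2 * ((p - 1) / 2 * (s - t))"
    using \<open>c \<le> w * p\<close> c p st by (intro mult_mono mult_right_mono) auto
  also have "\<dots> \<le> w * p / 2 * (sgn s * \<bar>s\<bar> powr (p - 1) - sgn t * \<bar>t\<bar> powr (p - 1))"
    using w p st by (intro mult_left_mono sgn_mult_abs_powr_increment_lower_bound) auto
  also have "\<dots> = (x - s) - (y - t)"
    unfolding s_def t_def Scp_residual[OF w(1,2)] by (simp add: right_diff_distrib)
  finally have "c * \<rho> * (s - t) / 4 \<le> (x - s) - (y - t)" .
  then have "c * \<rho> * (x - y) \<le> ((x - s) - (y - t)) * (4 + c * \<rho>)"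
    by (simp add: field_simps)
  moreover have "0 < 4 + c * \<rho>"
    using c p by (simp add: add_pos_pos)
  ultimately have "c * \<rho> * (x - y) / (4 + c * \<rho>) \<le> (x - s) - (y - t)"
    by (simp add: pos_divide_le_eq)
  then show ?thesis
    unfolding s_def t_def by simp
qed

lemma abs_increment_lower_bound_if_slope:
  fixes G :: "real \<Rightarrow> real"
  assumes mono: "\<And>x y. x \<le> y \<Longrightarrow> G x \<le> G y"
    and slope: "\<And>x y. \<bar>x\<bar> \<le> 2 \<Longrightarrow> \<bar>y\<bar> \<le> 2 \<Longrightarrow> y \<le> x \<Longrightarrow> \<kappa> * (x - y) \<le> G x - G y"
    and "\<bar>\<alpha>\<bar> \<le> 1" "0 \<le> \<kappa>"
  shows "\<kappa> * min \<bar>\<nu>\<bar> 1 \<le> \<bar>G (\<alpha> + \<nu>) - G \<alpha>\<bar>"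
proof (cases "0 \<le> \<nu>")
  case True
  have "\<kappa> * min \<bar>\<nu>\<bar> 1 \<le> G (\<alpha> + min \<nu> 1) - G \<alpha>"
    using slope[of "\<alpha> + min \<nu> 1" \<alpha>] assms(3) True by auto
  also have "\<dots> \<le> G (\<alpha> + \<nu>) - G \<alpha>"
    using mono[of "\<alpha> + min \<nu> 1" "\<alpha> + \<nu>"] by simp
  finally show ?thesis
    by simp
next
  case False
  have "\<kappa> * min \<bar>\<nu>\<bar> 1 \<le> G \<alpha> - G (\<alpha> + max \<nu> (- 1))"
    using slope[of \<alpha> "\<alpha> + max \<nu> (- 1)"] assms(3) False by (auto simp: min_def max_def)
  also have "\<dots> \<le> G \<alpha> - G (\<alpha> + \<nu>)"
    using mono[of "\<alpha> + \<nu>" "\<alpha> + max \<nu> (- 1)"] by simp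
  finally show ?thesis
    by simp
qed

lemma soft_threshold_residual_lower_bound:
  assumes "0 < c" "c \<le> w" "\<bar>\<alpha>\<bar> \<le> c / 4"
  shows "min \<bar>\<nu>\<bar> (c / 4) \<le> \<bar>Scp w 1 (\<alpha> + \<nu>) - Scp w 1 \<alpha> - \<nu>\<bar>"
proof -
  have S\<alpha>: "Scp w 1 \<alpha> = 0"
    using assms by (auto simp: Scp_def)
  show ?thesis
  proof (cases "\<bar>\<alpha> + \<nu>\<bar> \<le> w / 2")
    case True
    then have "Scp w 1 (\<alpha> + \<nu>) = 0"
      by (auto simp: Scp_def abs_if split: if_splits)
    then show ?thesis
      using S\<alpha> by simp
  next
    case False
    then have "c / 4 \<le> \<bar>Scp w 1 (\<alpha> + \<nu>) - Scp w 1 \<alpha> - \<nu>\<bar>"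
      using S\<alpha> assms by (auto simp: Scp_def abs_if split: if_splits)
    then show ?thesis
      by linarith
  qed
qed

lemma Scp_residual_lower_bound:
  assumes c: "0 < c" "c \<le> w" and p: "1 \<le> p" "p \<le> 2" "0 < \<rho>" "p = 1 \<or> \<rho> \<le> p - 1"
    and \<alpha>: "\<bar>\<alpha>\<bar> \<le> min (c / 4) 1"
  shows "min (c * \<rho> / (4 + c * \<rho>) * \<bar>\<nu>\<bar>) (min (c * \<rho> / (4 + c * \<rho>)) (c / 4))
    \<le> \<bar>Scp w p (\<alpha> + \<nu>) - Scp w p \<alpha> - \<nu>\<bar>"
proof -
  define \<kappa> where "\<kappa> = c * \<rho> / (4 + c * \<rho>)"
  have "0 < c * \<rho>"
    using c p by simp
  then have \<kappa>: "0 < \<kappa>" "\<kappa> < 1"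
    unfolding \<kappa>_def by (simp_all add: divide_less_eq)
  have "min (\<kappa> * \<bar>\<nu>\<bar>) (min \<kappa> (c / 4)) \<le> \<bar>Scp w p (\<alpha> + \<nu>) - Scp w p \<alpha> - \<nu>\<bar>"
  proof (cases "p = 1")
    case True
    then show ?thesis
      using soft_threshold_residual_lower_bound[OF c, of \<alpha> \<nu>] \<alpha> \<kappa> mult_left_le_one_le[of "\<bar>\<nu>\<bar>" \<kappa>]
      by auto
  next
    case False
    then have p': "1 < p" "\<rho> \<le> p - 1"
      using p by auto
    have "\<kappa> * min \<bar>\<nu>\<bar> 1 \<le> \<bar>(\<alpha> + \<nu> - Scp w p (\<alpha> + \<nu>)) - (\<alpha> - Scp w p \<alpha>)\<bar>"
      unfolding \<kappa>_def
    proof (rule abs_increment_lower_bound_if_slope)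
      show "x - Scp w p x \<le> y - Scp w p y" if "x \<le> y" for x y
        using Scp_residual_mono[OF _ p(1) that] c by simp
      show "c * \<rho> / (4 + c * \<rho>) * (x - y) \<le> (x - Scp w p x) - (y - Scp w p y)"
        if "\<bar>x\<bar> \<le> 2" "\<bar>y\<bar> \<le> 2" "y \<le> x" for x y
        using Scp_residual_slope[OF c p(3) p'(2) p(2) that] .
    qed (use \<alpha> \<kappa> \<kappa>_def in auto)
    moreover have "(\<alpha> + \<nu> - Scp w p (\<alpha> + \<nu>)) - (\<alpha> - Scp w p \<alpha>) = - (Scp w p (\<alpha> + \<nu>) - Scp w p \<alpha> - \<nu>)"
      by simp
    moreover have "\<kappa> * min \<bar>\<nu>\<bar> 1 = min (\<kappa> * \<bar>\<nu>\<bar>) \<kappa>"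
      using \<kappa> by (simp add: min_mult_distrib_left)
    ultimately show ?thesis
      by (auto simp only: abs_minus_cancel min_le_iff_disj)
  qed
  then show ?thesis
    unfolding \<kappa>_def .
qed

section \<open>Firmly nonexpansive maps and the operator \<open>SWP\<close>\<close>

definition firmly_nonexpansive :: "('a::real_inner \<Rightarrow> 'a) \<Rightarrow> bool" where
  "firmly_nonexpansive N \<longleftrightarrow> (\<forall>a b. (norm (N a - N b))\<^sup>2 \<le> inner (N a - N b) (a - b))"

lemma firmly_nonexpansiveD:
  "firmly_nonexpansive N \<Longrightarrow> (norm (N a - N b))\<^sup>2 \<le> inner (N a - N b) (a - b)"
  unfolding firmly_nonexpansive_def by blast

lemma firmly_nonexpansive_norm_sq:
  assumes "firmly_nonexpansive N"
  shows "(norm (N a - N b))\<^sup>2 + (norm ((N a - N b) - (a - b)))\<^sup>2 \<le> (norm (a - b))\<^sup>2"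
  using firmly_nonexpansiveD[OF assms, of a b]
  by (simp add: power2_norm_eq_inner inner_diff_left inner_diff_right inner_commute)

lemma firmly_nonexpansive_imp_nonexpansive:
  assumes "firmly_nonexpansive N"
  shows "norm (N a - N b) \<le> norm (a - b)"
proof (rule power2_le_imp_le)
  show "(norm (N a - N b))\<^sup>2 \<le> (norm (a - b))\<^sup>2"
    using firmly_nonexpansive_norm_sq[OF assms, of a b] zero_le_power2[of "norm ((N a - N b) - (a - b))"]
    by linarith
qed simp

lemma SWP_coefficient:
  fixes \<phi> :: "'i \<Rightarrow> 'a::{real_inner, complete_space}"
  assumes onb: "orthonormal_basis \<phi>" and w: "\<And>\<gamma>. 0 \<le> w \<gamma>" and p: "\<And>\<gamma>. 1 \<le> p \<gamma>"
  shows "inner (SWP \<phi> w p h) (\<phi> \<delta>) = Scp (w \<delta>) (p \<delta>) (inner h (\<phi> \<delta>))"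
proof -
  define d where "d \<gamma> = Scp (w \<gamma>) (p \<gamma>) (inner h (\<phi> \<gamma>))" for \<gamma>
  have "(d \<gamma>)\<^sup>2 \<le> (inner h (\<phi> \<gamma>))\<^sup>2" for \<gamma>
    unfolding d_def using abs_Scp_le[OF w p] by (simp add: abs_le_square_iff)
  then have "(\<lambda>\<gamma>. (d \<gamma>)\<^sup>2) summable_on UNIV"
    by (intro summable_on_comparison_test[OF summable_on_orthonormal_coefficients_sq[OF onb]]) auto
  then have "(\<lambda>\<gamma>. d \<gamma> *\<^sub>R \<phi> \<gamma>) summable_on UNIV"
    by (rule summable_on_orthonormal_series[OF onb])
  then have "((\<lambda>\<gamma>. d \<gamma> *\<^sub>R \<phi> \<gamma>) has_sum SWP \<phi> w p h) UNIV"
    unfolding SWP_def d_def[symmetric] by (rule has_sum_infsum)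
  then show ?thesis
    unfolding d_def by (rule inner_orthonormal_series[OF onb])
qed

lemma firmly_nonexpansive_SWP:
  fixes \<phi> :: "'i \<Rightarrow> 'a::{real_inner, complete_space}"
  assumes onb: "orthonormal_basis \<phi>" and w: "\<And>\<gamma>. 0 \<le> w \<gamma>" and p: "\<And>\<gamma>. 1 \<le> p \<gamma>"
  shows "firmly_nonexpansive (SWP \<phi> w p)"
  unfolding firmly_nonexpansive_def
proof (intro allI)
  fix a b :: 'a
  let ?X = "SWP \<phi> w p a - SWP \<phi> w p b"
  show "(norm ?X)\<^sup>2 \<le> inner ?X (a - b)"
  proof (rule has_sum_mono[OF parseval[OF onb] parseval_inner[OF onb]])
    show "(inner ?X (\<phi> \<gamma>))\<^sup>2 \<le> inner ?X (\<phi> \<gamma>) * inner (a - b) (\<phi> \<gamma>)" for \<gamma>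
      using Scp_firmly_nonexpansive[OF w p]
      by (simp add: inner_diff_left SWP_coefficient[OF onb w p])
  qed
qed

lemma norm_sq_le_by_SWP_residual:
  fixes \<phi> :: "'i \<Rightarrow> 'a::{real_inner, complete_space}"
  assumes onb: "orthonormal_basis \<phi>" and c: "0 < c" "\<And>\<gamma>. c \<le> w \<gamma>"
    and p: "\<And>\<gamma>. 1 \<le> p \<gamma>" "\<And>\<gamma>. p \<gamma> \<le> 2" "0 < \<rho>" "\<And>\<gamma>. p \<gamma> = 1 \<or> \<rho> \<le> p \<gamma> - 1"
    and small: "norm (SWP \<phi> w p (a + v) - SWP \<phi> w p a - v) < min (c * \<rho> / (4 + c * \<rho>)) (c / 4)"
  shows "(norm v)\<^sup>2 \<le> (norm (SWP \<phi> w p (a + v) - SWP \<phi> w p a - v))\<^sup>2 / (c * \<rho> / (4 + c * \<rho>))\<^sup>2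
    + (\<Sum>\<gamma>\<in>{\<gamma>. min (c / 4) 1 < \<bar>inner a (\<phi> \<gamma>)\<bar>}. (inner v (\<phi> \<gamma>))\<^sup>2)"
proof (rule norm_sq_le_by_coefficients[OF onb])
  show "finite {\<gamma>. min (c / 4) 1 < \<bar>inner a (\<phi> \<gamma>)\<bar>}"
    using c by (intro finite_large_orthonormal_coefficients[OF onb]) simp
  show "0 < c * \<rho> / (4 + c * \<rho>)"
    using c p by (simp add: add_pos_pos)
  fix \<gamma> assume "\<gamma> \<notin> {\<gamma>. min (c / 4) 1 < \<bar>inner a (\<phi> \<gamma>)\<bar>}"
  define D where "D = SWP \<phi> w p (a + v) - SWP \<phi> w p a - v"
  have w: "0 \<le> w \<gamma>" for \<gamma>
    using c(1) c(2)[of \<gamma>] by linarith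
  have D\<gamma>: "inner D (\<phi> \<gamma>) = Scp (w \<gamma>) (p \<gamma>) (inner a (\<phi> \<gamma>) + inner v (\<phi> \<gamma>))
      - Scp (w \<gamma>) (p \<gamma>) (inner a (\<phi> \<gamma>)) - inner v (\<phi> \<gamma>)"
    unfolding D_def by (simp add: inner_diff_left inner_add_left SWP_coefficient[OF onb w p(1)])
  have "min (c * \<rho> / (4 + c * \<rho>) * \<bar>inner v (\<phi> \<gamma>)\<bar>) (min (c * \<rho> / (4 + c * \<rho>)) (c / 4))
      \<le> \<bar>inner D (\<phi> \<gamma>)\<bar>"
    unfolding D\<gamma> using \<open>\<gamma> \<notin> _\<close> c p by (intro Scp_residual_lower_bound) auto
  moreover have "\<bar>inner D (\<phi> \<gamma>)\<bar> < min (c * \<rho> / (4 + c * \<rho>)) (c / 4)"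
    using abs_inner_orthonormal_le[OF onb, of D \<gamma>] small unfolding D_def by linarith
  ultimately show "c * \<rho> / (4 + c * \<rho>) * \<bar>inner v (\<phi> \<gamma>)\<bar> \<le> \<bar>inner D (\<phi> \<gamma>)\<bar>"
    by linarith
qed

lemma SWP_residual_tendsto_zero_imp_norm_tendsto_zero:
  fixes \<phi> :: "'i \<Rightarrow> 'a::{real_inner, complete_space}"
  assumes onb: "orthonormal_basis \<phi>" and c: "0 < c" "\<And>\<gamma>. c \<le> w \<gamma>"
    and p: "\<And>\<gamma>. 1 \<le> p \<gamma>" "\<And>\<gamma>. p \<gamma> \<le> 2" "0 < \<rho>" "\<And>\<gamma>. p \<gamma> = 1 \<or> \<rho> \<le> p \<gamma> - 1"
    and weak: "weakly_converges v 0"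
    and residual: "(\<lambda>k. norm (SWP \<phi> w p (a + v k) - SWP \<phi> w p a - v k)) \<longlonglongrightarrow> 0"
  shows "(\<lambda>k. norm (v k)) \<longlonglongrightarrow> 0"
proof -
  define \<kappa> where "\<kappa> = c * \<rho> / (4 + c * \<rho>)"
  have \<kappa>: "0 < \<kappa>"
    unfolding \<kappa>_def using c p by (simp add: add_pos_pos)
  define \<Gamma> where "\<Gamma> = {\<gamma>. min (c / 4) 1 < \<bar>inner a (\<phi> \<gamma>)\<bar>}"
  define D where "D k = SWP \<phi> w p (a + v k) - SWP \<phi> w p a - v k" for k
  have "eventually (\<lambda>k. norm (D k) < min \<kappa> (c / 4)) sequentially"
    using residual \<kappa> c unfolding D_def by (intro order_tendstoD(2)) auto
  then have "eventually (\<lambda>k. norm ((norm (v k))\<^sup>2) \<le> (norm (D k))\<^sup>2 / \<kappa>\<^sup>2 + (\<Sum>\<gamma>\<in>\<Gamma>. (inner (v k) (\<phi> \<gamma>))\<^sup>2))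
      sequentially"
    unfolding \<kappa>_def \<Gamma>_def D_def
    by (rule eventually_mono) (simp add: norm_sq_le_by_SWP_residual[OF onb c p])
  moreover have "(\<lambda>k. (norm (D k))\<^sup>2 / \<kappa>\<^sup>2 + (\<Sum>\<gamma>\<in>\<Gamma>. (inner (v k) (\<phi> \<gamma>))\<^sup>2)) \<longlonglongrightarrow>
      0\<^sup>2 / \<kappa>\<^sup>2 + (\<Sum>\<gamma>\<in>\<Gamma>. 0\<^sup>2)"
  proof (intro tendsto_intros)
    show "(\<lambda>k. norm (D k)) \<longlonglongrightarrow> 0"
      using residual unfolding D_def .
    show "(\<lambda>k. inner (v k) (\<phi> \<gamma>)) \<longlonglongrightarrow> 0" for \<gamma>
      using weak unfolding weakly_converges_def by simp
  qed (use \<kappa> in simp)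
  then have "(\<lambda>k. (norm (D k))\<^sup>2 / \<kappa>\<^sup>2 + (\<Sum>\<gamma>\<in>\<Gamma>. (inner (v k) (\<phi> \<gamma>))\<^sup>2)) \<longlonglongrightarrow> 0"
    by simp
  ultimately have "(\<lambda>k. (norm (v k))\<^sup>2) \<longlonglongrightarrow> 0"
    by (rule Lim_null_comparison)
  then have "(\<lambda>k. sqrt ((norm (v k))\<^sup>2)) \<longlonglongrightarrow> sqrt 0"
    by (rule tendsto_real_sqrt)
  then show ?thesis
    by simp
qed

section \<open>The thresholded Landweber iteration\<close>

lemma not_eventually_decreasing_by:
  fixes a :: "nat \<Rightarrow> real"
  assumes "\<And>k. 0 \<le> a k" "0 < e"
  shows "\<not> eventually (\<lambda>k. a (Suc k) \<le> a k - e) sequentially"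
proof
  assume "eventually (\<lambda>k. a (Suc k) \<le> a k - e) sequentially"
  then obtain N where N: "\<And>k. N \<le> k \<Longrightarrow> a (Suc k) \<le> a k - e"
    unfolding eventually_sequentially by blast
  have descent: "a (N + j) \<le> a N - real j * e" for j
  proof (induction j)
    case (Suc j)
    then show ?case
      using N[of "N + j"] by (simp add: algebra_simps)
  qed simp
  obtain j where "a N < real j * e"
    using reals_Archimedean3[OF \<open>0 < e\<close>] by blast
  with descent[of j] assms(1)[of "N + j"] show False
    by linarith
qed

text \<open>Opial's argument: if \<open>T l \<noteq> l\<close>, expanding \<open>\<parallel>f\<^sub>k\<^sub>+\<^sub>1 - T l\<parallel>\<^sup>2 \<le> \<parallel>f\<^sub>k - l\<parallel>\<^sup>2\<close> around \<open>l\<close> shows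
  that \<open>\<parallel>f\<^sub>k - l\<parallel>\<^sup>2\<close> eventually drops by a fixed amount at every step.\<close>

lemma weak_limit_of_nonexpansive_orbit_is_fixpoint:
  fixes T :: "'a::real_inner \<Rightarrow> 'a"
  assumes T: "\<And>x y. norm (T x - T y) \<le> norm (x - y)"
    and orbit: "\<And>k. f (Suc k) = T (f k)" and weak: "weakly_converges f l"
  shows "T l = l"
proof (rule ccontr)
  assume "T l \<noteq> l"
  define \<delta> where "\<delta> = (norm (l - T l))\<^sup>2"
  have "0 < \<delta>"
    using \<open>T l \<noteq> l\<close> by (simp add: \<delta>_def)
  have step: "(norm (f (Suc k) - l))\<^sup>2 + 2 * inner (f (Suc k) - l) (l - T l) + \<delta> \<le> (norm (f k - l))\<^sup>2"
    for k
  proof -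
    have "(norm (f (Suc k) - l))\<^sup>2 + 2 * inner (f (Suc k) - l) (l - T l) + \<delta>
        = (norm (f (Suc k) - T l))\<^sup>2"
      unfolding \<delta>_def
      by (simp add: power2_norm_eq_inner inner_diff_left inner_diff_right inner_commute)
    also have "\<dots> \<le> (norm (f k - l))\<^sup>2"
      using T[of "f k" l] by (simp add: orbit power_mono)
    finally show ?thesis .
  qed
  have "(\<lambda>k. inner (f k - l) (l - T l)) \<longlonglongrightarrow> 0"
    using weakly_converges_iff_diff_zero[THEN iffD1, OF weak] unfolding weakly_converges_def by simp
  then have "(\<lambda>k. inner (f (Suc k) - l) (l - T l)) \<longlonglongrightarrow> 0"
    by (rule LIMSEQ_Suc)
  then have "eventually (\<lambda>k. - \<delta> / 4 < inner (f (Suc k) - l) (l - T l)) sequentially"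
    using \<open>0 < \<delta>\<close> by (intro order_tendstoD(1)) auto
  then have "eventually (\<lambda>k. (norm (f (Suc k) - l))\<^sup>2 \<le> (norm (f k - l))\<^sup>2 - \<delta> / 2) sequentially"
  proof (rule eventually_mono)
    show "(norm (f (Suc k) - l))\<^sup>2 \<le> (norm (f k - l))\<^sup>2 - \<delta> / 2"
      if "- \<delta> / 4 < inner (f (Suc k) - l) (l - T l)" for k
      using step[of k] that by linarith
  qed
  then show False
    using not_eventually_decreasing_by[of "\<lambda>k. (norm (f k - l))\<^sup>2" "\<delta> / 2"] \<open>0 < \<delta>\<close> by simp
qed

lemma tendsto_zero_if_decrements_bounded:
  fixes a b :: "nat \<Rightarrow> real"
  assumes "\<And>k. 0 \<le> a k" "\<And>k. 0 \<le> b k" "\<And>k. a (Suc k) + b k \<le> a k"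
  shows "b \<longlonglongrightarrow> 0"
proof -
  have partial_sums: "(\<Sum>i<n. b i) + a n \<le> a 0" for n
  proof (induction n)
    case (Suc n)
    then show ?case
      using assms(3)[of n] by simp
  qed simp
  have "(\<Sum>i<n. b i) \<le> a 0" for n
    using partial_sums[of n] assms(1)[of n] by linarith
  then have "summable b"
    by (rule summableI_nonneg_bounded[OF assms(2)])
  then show ?thesis
    by (rule summable_LIMSEQ_zero)
qed

lemma tendsto_zero_if_sum_squares_tendsto_zero:
  fixes x y :: "nat \<Rightarrow> real"
  assumes "(\<lambda>k. (x k)\<^sup>2 + (y k)\<^sup>2) \<longlonglongrightarrow> 0"
  shows "x \<longlonglongrightarrow> 0"
proof (rule Lim_null_comparison)
  show "eventually (\<lambda>k. norm (x k) \<le> sqrt ((x k)\<^sup>2 + (y k)\<^sup>2)) sequentially"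
    by simp
  show "(\<lambda>k. sqrt ((x k)\<^sup>2 + (y k)\<^sup>2)) \<longlonglongrightarrow> 0"
    using tendsto_real_sqrt[OF assms] by simp
qed

lemma adjoint_diff:
  fixes K :: "'a::real_inner \<Rightarrow> 'b::real_inner"
  assumes adj: "\<And>x y. inner (K x) y = inner x (K' y)"
  shows "K' (y - z) = K' y - K' z"
proof -
  have "inner x (K' (y - z) - (K' y - K' z)) = 0" for x
    by (simp add: inner_diff_right adj[symmetric])
  then have "inner (K' (y - z) - (K' y - K' z)) (K' (y - z) - (K' y - K' z)) = 0" .
  then show ?thesis
    by simp
qed

lemma norm_adjoint_le:
  fixes K :: "'a::real_inner \<Rightarrow> 'b::real_inner"
  assumes adj: "\<And>x y. inner (K x) y = inner x (K' y)" and contr: "\<And>x. norm (K x) \<le> norm x"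
  shows "norm (K' y) \<le> norm y"
proof -
  have "norm (K' y) * norm (K' y) = inner (K (K' y)) y"
    by (simp add: adj flip: power2_norm_eq_inner power2_eq_square)
  also have "\<dots> \<le> norm (K (K' y)) * norm y"
    by (rule order_trans[OF abs_ge_self Cauchy_Schwarz_ineq2])
  also have "\<dots> \<le> norm (K' y) * norm y"
    using contr by (intro mult_right_mono) auto
  finally have "norm (K' y) * norm (K' y) \<le> norm (K' y) * norm y" .
  from mult_left_le_imp_le[OF this] show ?thesis
    by (cases "K' y = 0") auto
qed

lemma norm_sq_landweber_step:
  fixes K :: "'a::real_inner \<Rightarrow> 'b::real_inner"
  assumes adj: "\<And>x y. inner (K x) y = inner x (K' y)" and contr: "\<And>x. norm (K x) \<le> norm x"
  shows "(norm (x - K' (K x)))\<^sup>2 \<le> (norm x)\<^sup>2 - (norm (K x))\<^sup>2"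
proof -
  have "(norm (x - K' (K x)))\<^sup>2 = (norm x)\<^sup>2 - 2 * (norm (K x))\<^sup>2 + (norm (K' (K x)))\<^sup>2"
    by (simp add: power2_norm_eq_inner inner_diff_left inner_diff_right inner_commute adj[symmetric])
  moreover have "(norm (K' (K x)))\<^sup>2 \<le> (norm (K x))\<^sup>2"
    using norm_adjoint_le[OF adj contr] by (simp add: power_mono)
  ultimately show ?thesis
    by linarith
qed

lemma norm_landweber_step_le:
  fixes K :: "'a::real_inner \<Rightarrow> 'b::real_inner"
  assumes adj: "\<And>x y. inner (K x) y = inner x (K' y)" and contr: "\<And>x. norm (K x) \<le> norm x"
  shows "norm (x - K' (K x)) \<le> norm x"
proof (rule power2_le_imp_le)
  show "(norm (x - K' (K x)))\<^sup>2 \<le> (norm x)\<^sup>2"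
    using norm_sq_landweber_step[OF adj contr, of x] zero_le_power2[of "norm (K x)"] by linarith
qed simp

context
  fixes N :: "'a::real_inner \<Rightarrow> 'a" and K :: "'a \<Rightarrow> 'b::real_inner" and K' :: "'b \<Rightarrow> 'a"
  assumes N: "firmly_nonexpansive N" and K: "linear K"
    and adj: "\<And>x y. inner (K x) y = inner x (K' y)" and contr: "\<And>x. norm (K x) \<le> norm x"
begin

lemma landweber_update_shift:
  "x + K' (g - K x) = (l + K' (g - K l)) + ((x - l) - K' (K (x - l)))"
  using adjoint_diff[OF adj, of "g - K l" "K (x - l)"] by (simp add: linear_diff[OF K] algebra_simps)

lemma thresholded_landweber_weak_limit_fixpoint:
  assumes iter: "\<And>k. f (Suc k) = N (f k + K' (g - K (f k)))" and weak: "weakly_converges f l"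
  shows "N (l + K' (g - K l)) = l"
proof (rule weak_limit_of_nonexpansive_orbit_is_fixpoint[OF _ iter weak])
  fix x y
  have "norm (N (x + K' (g - K x)) - N (y + K' (g - K y))) \<le>
      norm ((x + K' (g - K x)) - (y + K' (g - K y)))"
    by (rule firmly_nonexpansive_imp_nonexpansive[OF N])
  also have "\<dots> = norm ((x - y) - K' (K (x - y)))"
    by (subst landweber_update_shift[of x g y]) (simp add: algebra_simps)
  also have "\<dots> \<le> norm (x - y)"
    by (rule norm_landweber_step_le[OF adj contr])
  finally show "norm (N (x + K' (g - K x)) - N (y + K' (g - K y))) \<le> norm (x - y)" .
qed

lemma thresholded_landweber_error_recursion:
  assumes iter: "\<And>k. f (Suc k) = N (f k + K' (g - K (f k)))"
    and fixpoint: "N (l + K' (g - K l)) = l"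
  shows "f (Suc k) - l =
    N ((l + K' (g - K l)) + ((f k - l) - K' (K (f k - l)))) - N (l + K' (g - K l))"
  using iter[of k] fixpoint landweber_update_shift[of "f k" g l] by simp

lemma error_recursion_energy:
  assumes "u' = N (h + (u - K' (K u))) - N h"
  shows "(norm u')\<^sup>2 + ((norm (u' - (u - K' (K u))))\<^sup>2 + (norm (K u))\<^sup>2) \<le> (norm u)\<^sup>2"
  using firmly_nonexpansive_norm_sq[OF N, of "h + (u - K' (K u))" h]
    norm_sq_landweber_step[OF adj contr, of u] assms by simp

lemma error_recursion_residual_bound:
  assumes "u' = N (h + (u - K' (K u))) - N h"
  shows "norm (N (h + u) - N h - u) \<le> 2 * norm (K u) + norm (u' - (u - K' (K u)))"
proof -
  define d\<^sub>1 d\<^sub>2 where "d\<^sub>1 = N (h + u) - N (h + (u - K' (K u)))" and "d\<^sub>2 = u' - (u - K' (K u))"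
  have "N (h + u) - N h - u = d\<^sub>1 + d\<^sub>2 - K' (K u)"
    using assms by (simp add: d\<^sub>1_def d\<^sub>2_def)
  then have "norm (N (h + u) - N h - u) \<le> norm d\<^sub>1 + norm d\<^sub>2 + norm (K' (K u))"
    using norm_triangle_ineq4[of "d\<^sub>1 + d\<^sub>2" "K' (K u)"] norm_triangle_ineq[of d\<^sub>1 d\<^sub>2] by simp
  moreover have "norm d\<^sub>1 \<le> norm (K' (K u))"
    using firmly_nonexpansive_imp_nonexpansive[OF N, of "h + u" "h + (u - K' (K u))"]
    by (simp add: d\<^sub>1_def)
  moreover have "norm (K' (K u)) \<le> norm (K u)"
    by (rule norm_adjoint_le[OF adj contr])
  ultimately show ?thesis
    unfolding d\<^sub>2_def by linarith
qed

lemma error_recursion_tendsto_zero: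
  assumes rec: "\<And>k. u (Suc k) = N (h + (u k - K' (K (u k)))) - N h"
  shows "(\<lambda>k. norm (K (u k))) \<longlonglongrightarrow> 0"
    and "(\<lambda>k. norm (N (h + u k) - N h - u k)) \<longlonglongrightarrow> 0"
proof -
  have decrements: "(\<lambda>k. (norm (u (Suc k) - (u k - K' (K (u k)))))\<^sup>2 + (norm (K (u k)))\<^sup>2) \<longlonglongrightarrow> 0"
    by (rule tendsto_zero_if_decrements_bounded[where a="\<lambda>k. (norm (u k))\<^sup>2",
          OF _ _ error_recursion_energy[OF rec]]) auto
  then have step: "(\<lambda>k. norm (u (Suc k) - (u k - K' (K (u k))))) \<longlonglongrightarrow> 0"
    by (rule tendsto_zero_if_sum_squares_tendsto_zero)
  have "(\<lambda>k. (norm (K (u k)))\<^sup>2 + (norm (u (Suc k) - (u k - K' (K (u k)))))\<^sup>2) \<longlonglongrightarrow> 0"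
    using decrements by (simp add: add.commute)
  then show Ku: "(\<lambda>k. norm (K (u k))) \<longlonglongrightarrow> 0"
    by (rule tendsto_zero_if_sum_squares_tendsto_zero)
  have "eventually (\<lambda>k. norm (norm (N (h + u k) - N h - u k))
      \<le> 2 * norm (K (u k)) + norm (u (Suc k) - (u k - K' (K (u k))))) sequentially"
    using error_recursion_residual_bound[OF rec] by simp
  moreover have "(\<lambda>k. 2 * norm (K (u k)) + norm (u (Suc k) - (u k - K' (K (u k))))) \<longlonglongrightarrow> 0"
    by (rule tendsto_add_zero[OF tendsto_mult_right_zero[OF Ku] step])
  ultimately show "(\<lambda>k. norm (N (h + u k) - N h - u k)) \<longlonglongrightarrow> 0"
    by (rule Lim_null_comparison)
qed

end

lemma finite_exponents_gap:
  fixes p :: "'i \<Rightarrow> real"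
  assumes "finite (range p)" "\<And>\<gamma>. 1 \<le> p \<gamma>"
  shows "\<exists>\<rho>>0. \<forall>\<gamma>. p \<gamma> = 1 \<or> \<rho> \<le> p \<gamma> - 1"
proof -
  define R where "R = insert 1 ((\<lambda>t. t - 1) ` (range p - {1}))"
  have R: "finite R" "R \<noteq> {}"
    unfolding R_def using assms(1) by auto
  have "0 < Min R"
    using R assms(2) by (subst Min_gr_iff) (auto simp: R_def order.strict_iff_order)
  moreover have "p \<gamma> = 1 \<or> Min R \<le> p \<gamma> - 1" for \<gamma>
    using R(1) by (cases "p \<gamma> = 1") (auto simp: R_def intro!: Min_le)
  ultimately show ?thesis
    by blast
qed

lemma piecewise_constant_exponents:
  fixes p :: "'i \<Rightarrow> real" and pp :: "nat \<Rightarrow> real"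
  assumes cover: "(\<Union>i\<in>{1..n}. \<Gamma>s i) = UNIV"
    and pp_range: "\<And>i. i \<in> {1..n} \<Longrightarrow> 1 \<le> pp i \<and> pp i \<le> 2"
    and p_def: "\<And>i \<gamma>. i \<in> {1..n} \<Longrightarrow> \<gamma> \<in> \<Gamma>s i \<Longrightarrow> p \<gamma> = pp i"
  shows "\<exists>\<rho>>0. \<forall>\<gamma>. 1 \<le> p \<gamma> \<and> p \<gamma> \<le> 2 \<and> (p \<gamma> = 1 \<or> \<rho> \<le> p \<gamma> - 1)"
proof -
  have p_range: "p \<gamma> \<in> pp ` {1..n}" for \<gamma>
    using cover p_def by blast
  have p_bounds: "1 \<le> p \<gamma> \<and> p \<gamma> \<le> 2" for \<gamma>
    using p_range[of \<gamma>] pp_range by auto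
  have "finite (range p)"
    by (rule finite_subset[of _ "pp ` {1..n}"]) (use p_range in auto)
  then obtain \<rho> where "0 < \<rho>" "\<forall>\<gamma>. p \<gamma> = 1 \<or> \<rho> \<le> p \<gamma> - 1"
    using finite_exponents_gap p_bounds by blast
  with p_bounds show ?thesis
    by blast
qed

theorem theorem6p15:
  fixes \<phi> :: "'i \<Rightarrow> 'a::{real_inner, complete_space}"
    and K :: "'a \<Rightarrow> 'b::{real_inner, complete_space}"
    and g :: 'b
    and n :: nat and \<Gamma>s :: "nat \<Rightarrow> 'i set" and pp :: "nat \<Rightarrow> real"
    and p w :: "'i \<Rightarrow> real" and c :: real
    and f :: "nat \<Rightarrow> 'a" and fstar :: 'a
  assumes onb: "orthonormal_basis \<phi>"
    and K_lin: "bounded_linear K" and K_norm: "onorm K < 1"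
    and part_cover: "(\<Union>i\<in>{1..n}. \<Gamma>s i) = UNIV"
    and part_disj: "\<And>i j. i \<in> {1..n} \<Longrightarrow> j \<in> {1..n} \<Longrightarrow> i \<noteq> j \<Longrightarrow> \<Gamma>s i \<inter> \<Gamma>s j = {}"
    and pp_range: "\<And>i. i \<in> {1..n} \<Longrightarrow> 1 \<le> pp i \<and> pp i \<le> 2"
    and p_def: "\<And>i \<gamma>. i \<in> {1..n} \<Longrightarrow> \<gamma> \<in> \<Gamma>s i \<Longrightarrow> p \<gamma> = pp i"
    and c_pos: "c > 0" and w_ge: "\<And>\<gamma>. w \<gamma> \<ge> c"
    and iter: "\<And>k. f (Suc k) = SWP \<phi> w p (f k + adjoint K (g - K (f k)))"
    and weak: "weakly_converges f fstar"
  shows "let u = (\<lambda>k. f k - fstar);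
             h = fstar + adjoint K (g - K fstar)
         in ((\<lambda>k. norm (K (u k))) \<longlonglongrightarrow> 0)
          \<and> ((\<lambda>k. norm (SWP \<phi> w p (h + u k) - SWP \<phi> w p h - u k)) \<longlonglongrightarrow> 0)
          \<and> (\<forall>a v. weakly_converges v 0 \<and>
                   ((\<lambda>k. norm (SWP \<phi> w p (a + v k) - SWP \<phi> w p a - v k)) \<longlonglongrightarrow> 0)
                   \<longrightarrow> ((\<lambda>k. norm (v k)) \<longlonglongrightarrow> 0))
          \<and> ((\<lambda>k. norm (u k)) \<longlonglongrightarrow> 0)"
proof -
  have "\<exists>\<rho>>0. \<forall>\<gamma>. 1 \<le> p \<gamma> \<and> p \<gamma> \<le> 2 \<and> (p \<gamma> = 1 \<or> \<rho> \<le> p \<gamma> - 1)"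
    using part_cover pp_range p_def by (rule piecewise_constant_exponents)
  then obtain \<rho> where \<rho>: "0 < \<rho>" "\<And>\<gamma>. p \<gamma> = 1 \<or> \<rho> \<le> p \<gamma> - 1"
    and p: "\<And>\<gamma>. 1 \<le> p \<gamma>" "\<And>\<gamma>. p \<gamma> \<le> 2"
    by blast
  have w: "0 \<le> w \<gamma>" for \<gamma>
    using c_pos w_ge[of \<gamma>] by linarith
  have contr: "norm (K x) \<le> norm x" for x
    using onorm[OF K_lin, of x] K_norm mult_right_mono[of "onorm K" 1 "norm x"] by simp
  note landweber = firmly_nonexpansive_SWP[where w=w and p=p, OF onb w p(1)]
    bounded_linear.linear[OF K_lin] inner_adjoint[OF onb K_lin] contr
  note fixpoint = thresholded_landweber_weak_limit_fixpoint[where f=f, OF landweber iter weak]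
  note AB = error_recursion_tendsto_zero[where u="\<lambda>k. f k - fstar", OF landweber
      thresholded_landweber_error_recursion[where f=f, OF landweber iter fixpoint]]
  note C = SWP_residual_tendsto_zero_imp_norm_tendsto_zero[where w=w and p=p, OF onb c_pos w_ge p(1,2) \<rho>]
  show ?thesis
    unfolding Let_def
  proof (intro conjI allI impI)
    show "(\<lambda>k. norm (v k)) \<longlonglongrightarrow> 0"
      if "weakly_converges v 0 \<and> (\<lambda>k. norm (SWP \<phi> w p (a + v k) - SWP \<phi> w p a - v k)) \<longlonglongrightarrow> 0"
      for a v
      using C that by blast
  qed (use AB C[OF weakly_converges_iff_diff_zero[THEN iffD1, OF weak] AB(2)] in simp_all)
qed

end
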